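(* Let $n\ge3$, $\rho>0$, and let $h$ be a smooth function on $[0,\rho)$ such that $$F(x,y)=\sqrt{(1+|\overline{x}|^2)|\overline{y}|^2+\langle\overline{x},\overline{y}\rangle^2+e^{x^0}(y^0)^2}+h(|\overline{x}|)\langle\overline{x},\overline{y}\rangle$$ is a Finsler metric on $\mathbb{R}\times\mathbb{B}^n(\rho)$ (for instance $h(r)=\frac{k}{1+r^2}$ with $|k|<2$). Then $F$ is a cylindrically symmetric Finsler metric with vanishing Douglas curvature.
   Context: Points $x=(x^0,\overline{x})\in\mathbb{R}\times\mathbb{B}^n(\rho)$, tangent vectors $y=(y^0,\overline{y})$, $|\cdot|,\langle\cdot,\cdot\rangle$ Euclidean on $\mathbb{R}^n$. A Finsler metric $F$ is cylindrically symmetric if $F((x^0,O\overline{x}),(y^0,O\overline{y}))=F((x^0,\overline{x}),(y^0,\overline{y}))$ for all $O\in O(n)$. The Douglas curvature is $D^A_{BCD}=\frac{\partial^3}{\partial y^B\partial y^C\partial y^D}\big(G^A-\frac{1}{n+2}\sum_{E=0}^n\frac{\partial G^E}{\partial y^E}y^A\big)$, $A,B,C,D\in\{0,\dots,n\}$, where $G^A=\frac14g^{AB}\{[F^2]_{x^Cy^B}y^C-[F^2]_{x^B}\}$ are the geodesic coefficients ($g_{AB}=\frac12[F^2]_{y^Ay^B}$, summation convention). *)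

theory Defs
  imports "HOL-Analysis.Analysis"
begin

text \<open>Coordinates on R x R^n are indexed by the finite type 'n option:
  None is the coordinate 0 (x^0), Some i are the coordinates of xbar.\<close>

definition xbar :: "real^('n::finite) option \<Rightarrow> real^'n" where
  "xbar x = (\<chi> i. x $ Some i)"

definition dd :: "'a::real_normed_vector \<Rightarrow> ('a \<Rightarrow> real) \<Rightarrow> 'a \<Rightarrow> real" where
  "dd v f p = deriv (\<lambda>t. f (p + t *\<^sub>R v)) 0"

fun itdd :: "'a::real_normed_vector list \<Rightarrow> ('a \<Rightarrow> real) \<Rightarrow> 'a \<Rightarrow> real" where
  "itdd [] f = f"
| "itdd (v # vs) f = dd v (itdd vs f)"

definition smooth_on :: "'a::euclidean_space set \<Rightarrow> ('a \<Rightarrow> real) \<Rightarrow> bool" where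
  "smooth_on S f \<longleftrightarrow> open S \<and>
     (\<forall>vs. set vs \<subseteq> Basis \<longrightarrow> continuous_on S (itdd vs f) \<and>
        (\<forall>v\<in>Basis. \<forall>p\<in>S. (\<lambda>t. itdd vs f (p + t *\<^sub>R v)) differentiable (at 0)))"

definition smooth_real_on :: "real set \<Rightarrow> (real \<Rightarrow> real) \<Rightarrow> bool" where
  "smooth_real_on S h \<longleftrightarrow> (\<exists>D :: nat \<Rightarrow> real \<Rightarrow> real.
     (\<forall>t\<in>S. D 0 t = h t) \<and>
     (\<forall>k. \<forall>t\<in>S. (D k has_real_derivative D (Suc k) t) (at t within S)))"

definition pdy :: "'m::finite \<Rightarrow> (real^'m \<Rightarrow> real^'m \<Rightarrow> real) \<Rightarrow> real^'m \<Rightarrow> real^'m \<Rightarrow> real" where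
  "pdy A f x y = deriv (\<lambda>t. f x (y + t *\<^sub>R axis A 1)) 0"

definition pdx :: "'m::finite \<Rightarrow> (real^'m \<Rightarrow> real^'m \<Rightarrow> real) \<Rightarrow> real^'m \<Rightarrow> real^'m \<Rightarrow> real" where
  "pdx A f x y = deriv (\<lambda>t. f (x + t *\<^sub>R axis A 1) y) 0"

definition Fsq :: "(real^'m::finite \<Rightarrow> real^'m \<Rightarrow> real) \<Rightarrow> real^'m \<Rightarrow> real^'m \<Rightarrow> real" where
  "Fsq F x y = (F x y)^2"

definition fund_tensor :: "(real^'m::finite \<Rightarrow> real^'m \<Rightarrow> real) \<Rightarrow> real^'m \<Rightarrow> real^'m \<Rightarrow> real^'m^'m" where
  "fund_tensor F x y = (\<chi> A B. 1/2 * pdy A (pdy B (Fsq F)) x y)"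

definition finsler_metric :: "(real^'m::finite) set \<Rightarrow> (real^'m \<Rightarrow> real^'m \<Rightarrow> real) \<Rightarrow> bool" where
  "finsler_metric M F \<longleftrightarrow> open M \<and>
     smooth_on (M \<times> (UNIV - {0})) (\<lambda>(x,y). F x y) \<and>
     (\<forall>x\<in>M. \<forall>y. y \<noteq> 0 \<longrightarrow> F x y > 0) \<and>
     (\<forall>x\<in>M. \<forall>y. \<forall>l::real. l > 0 \<longrightarrow> F x (l *\<^sub>R y) = l * F x y) \<and>
     (\<forall>x\<in>M. \<forall>y. y \<noteq> 0 \<longrightarrow>
        (\<forall>v. v \<noteq> 0 \<longrightarrow> (\<Sum>A\<in>UNIV. \<Sum>B\<in>UNIV. fund_tensor F x y $ A $ B * v $ A * v $ B) > 0))"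

definition geod_coeff :: "(real^'m::finite \<Rightarrow> real^'m \<Rightarrow> real) \<Rightarrow> 'm \<Rightarrow> real^'m \<Rightarrow> real^'m \<Rightarrow> real" where
  "geod_coeff F A x y = 1/4 * (\<Sum>B\<in>UNIV. matrix_inv (fund_tensor F x y) $ A $ B *
      ((\<Sum>C\<in>UNIV. pdx C (pdy B (Fsq F)) x y * y $ C) - pdx B (Fsq F) x y))"

text \<open>Douglas curvature D^A_{BCD} on a manifold of dimension m = CARD('m);
  the factor is 1/(m+1) (= 1/(n+2) when m = n+1).\<close>
definition douglas :: "(real^'m::finite \<Rightarrow> real^'m \<Rightarrow> real) \<Rightarrow> 'm \<Rightarrow> 'm \<Rightarrow> 'm \<Rightarrow> 'm \<Rightarrow> real^'m \<Rightarrow> real^'m \<Rightarrow> real" where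
  "douglas F A B C D x y =
     pdy B (pdy C (pdy D (\<lambda>x y. geod_coeff F A x y
        - 1 / (real CARD('m) + 1) * (\<Sum>E\<in>UNIV. pdy E (geod_coeff F E) x y) * y $ A))) x y"

definition vanishing_douglas :: "(real^'m::finite) set \<Rightarrow> (real^'m \<Rightarrow> real^'m \<Rightarrow> real) \<Rightarrow> bool" where
  "vanishing_douglas M F \<longleftrightarrow>
     (\<forall>x\<in>M. \<forall>y. y \<noteq> 0 \<longrightarrow> (\<forall>A B C D. douglas F A B C D x y = 0))"

definition lift_orth :: "(real^'n \<Rightarrow> real^'n) \<Rightarrow> real^('n::finite) option \<Rightarrow> real^'n option" where
  "lift_orth Q x = (\<chi> A. case A of None \<Rightarrow> x $ None | Some i \<Rightarrow> Q (xbar x) $ i)"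

definition cylindrically_symmetric ::
  "(real^('n::finite) option) set \<Rightarrow> (real^'n option \<Rightarrow> real^'n option \<Rightarrow> real) \<Rightarrow> bool" where
  "cylindrically_symmetric M F \<longleftrightarrow>
     (\<forall>Q. orthogonal_transformation Q \<longrightarrow>
        (\<forall>x\<in>M. \<forall>y. F (lift_orth Q x) (lift_orth Q y) = F x y))"

definition cyl_domain :: "real \<Rightarrow> (real^('n::finite) option) set" where
  "cyl_domain \<rho> = {x. norm (xbar x) < \<rho>}"

definition F_ex :: "(real \<Rightarrow> real) \<Rightarrow> real^('n::finite) option \<Rightarrow> real^'n option \<Rightarrow> real" where
  "F_ex h x y =
     sqrt ((1 + (norm (xbar x))^2) * (norm (xbar y))^2 + (xbar x \<bullet> xbar y)^2
           + exp (x $ None) * (y $ None)^2)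
     + h (norm (xbar x)) * (xbar x \<bullet> xbar y)"

end

theory Submission
  imports Defs
begin

text \<open>
  Writing \<open>u = xbar x\<close>, the metric is a Randers metric \<open>F = \<alpha> + \<beta>\<close>: \<open>\<alpha>\<^sup>2 = y \<bullet> a(x) y\<close> with
  the Riemannian metric \<open>a(x) = diag (exp x\<^sup>0, (1 + |u|\<^sup>2) I + u u\<^sup>T)\<close>, and \<open>\<beta> = b(x) \<bullet> y\<close> with
  \<open>b(x) = h(|u|) u\<close>.  Being the gradient of a radial function, \<open>b\<close> has a symmetric Jacobian,
  i.e. \<open>\<beta>\<close> is closed.  For a Randers metric with closed \<open>\<beta>\<close>, solving the defining equation
  of the geodesic coefficients with the explicit fundamental tensor gives
  \<open>G\<^sup>A = G\<^sub>\<alpha>\<^sup>A + P y\<^sup>A\<close>, where \<open>G\<^sub>\<alpha>\<close> (the spray of \<open>\<alpha>\<close>) is quadratic in \<open>y\<close> and \<open>P\<close> is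
  positively homogeneous of degree one.  By Euler's identity \<open>y\<^sup>E \<partial>\<^sub>y\<^sub>E P = P\<close>, the trace term
  of the Douglas tensor cancels \<open>P y\<^sup>A\<close>, leaving a quadratic form in \<open>y\<close>, whose third
  \<open>y\<close>-derivatives vanish.  Cylindrical symmetry is immediate, since \<open>F\<close> only involves
  \<open>x\<^sup>0\<close>, \<open>y\<^sup>0\<close> and inner products of \<open>xbar x\<close> and \<open>xbar y\<close>.
\<close>

lemma matrix_inv_left:
  fixes A :: "real^'m::finite^'m"
  assumes "invertible A"
  shows "matrix_inv A ** A = mat 1"
  using assms unfolding invertible_def matrix_inv_def by (metis (mono_tags, lifting) someI_ex)

lemma matrix_inv_right:
  fixes A :: "real^'m::finite^'m"
  assumes "invertible A"
  shows "A ** matrix_inv A = mat 1"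
  using assms unfolding invertible_def matrix_inv_def by (metis (mono_tags, lifting) someI_ex)

lemma invertible_if_posdef:
  fixes A :: "real^'m::finite^'m"
  assumes "\<And>v. v \<noteq> 0 \<Longrightarrow> v \<bullet> (A *v v) > 0"
  shows "invertible A"
proof -
  have "A *v v = 0 \<Longrightarrow> v = 0" for v
    using assms[of v] by fastforce
  then show ?thesis
    using matrix_left_invertible_ker invertible_left_inverse by blast
qed

lemma matrix_vector_mult_component:
  "((M::real^'m::finite^'m) *v v) $ D = (\<Sum>C\<in>UNIV. M $ D $ C * v $ C)"
  by (simp add: matrix_vector_mult_def)

lemma matrix_vector_mult_axis: "((A::real^'m::finite^'m) *v axis C 1) $ D = A $ D $ C"
  by (simp add: matrix_vector_mult_def axis_def if_distrib cong: if_cong)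

lemma axis_one_nth: "axis D (1::real) $ i = (if i = D then 1 else 0)"
  by (simp add: axis_def)

lemma inner_symmetric_matrix:
  fixes A :: "real^'m::finite^'m"
  assumes "transpose A = A"
  shows "u \<bullet> (A *v w) = w \<bullet> (A *v u)"
proof -
  have s: "A$i$j = A$j$i" for i j using assms by (metis transpose_def vec_lambda_beta)
  have "u \<bullet> (A *v w) = (\<Sum>i\<in>UNIV. \<Sum>j\<in>UNIV. u$i * A$i$j * w$j)"
    by (simp add: inner_vec_def matrix_vector_mult_def sum_distrib_left mult.assoc)
  also have "\<dots> = (\<Sum>j\<in>UNIV. \<Sum>i\<in>UNIV. u$i * A$i$j * w$j)" by (rule sum.swap)
  also have "\<dots> = w \<bullet> (A *v u)"
    by (simp add: inner_vec_def matrix_vector_mult_def sum_distrib_left s mult.commute mult.left_commute)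
  finally show ?thesis .
qed

lemma eventually_line_in_open:
  fixes y v :: "'a::real_normed_vector"
  assumes "open U" "y \<in> U"
  shows "\<forall>\<^sub>F t in nhds (0::real). y + t *\<^sub>R v \<in> U"
proof -
  have "((\<lambda>t::real. y + t *\<^sub>R v) \<longlongrightarrow> y + 0 *\<^sub>R v) (nhds 0)"
    by (intro tendsto_intros filterlim_ident)
  then have "((\<lambda>t::real. y + t *\<^sub>R v) \<longlongrightarrow> y) (nhds 0)" by simp
  then show ?thesis using assms topological_tendstoD by blast
qed

lemma pdy_cong_open:
  assumes "open U" "y \<in> U" "\<And>z. z \<in> U \<Longrightarrow> f x z = g x z"
  shows "pdy D f x y = pdy D g x y"
proof -
  have "\<forall>\<^sub>F t in nhds 0. f x (y + t *\<^sub>R axis D 1) = g x (y + t *\<^sub>R axis D 1)"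
    by (rule eventually_mono[OF eventually_line_in_open[OF assms(1,2), of "axis D 1"]]) (simp add: assms(3))
  then show ?thesis unfolding pdy_def by (rule deriv_cong_ev) simp
qed

lemma pdy_cong_nonzero:
  assumes "y \<noteq> 0" "\<And>z. z \<noteq> 0 \<Longrightarrow> f x z = g x z"
  shows "pdy D f x y = pdy D g x y"
  by (rule pdy_cong_open[of "-{0}"]) (use assms in \<open>auto simp: open_Compl\<close>)

lemma pdy_eqI:
  assumes "((\<lambda>t. f x (y + t *\<^sub>R axis D 1)) has_real_derivative d) (at 0)"
  shows "pdy D f x y = d"
  using assms unfolding pdy_def by (rule DERIV_imp_deriv)

lemma pdx_eqI:
  assumes "((\<lambda>t. f (x + t *\<^sub>R axis D 1) y) has_real_derivative d) (at 0)"
  shows "pdx D f x y = d"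
  using assms unfolding pdx_def by (rule DERIV_imp_deriv)

lemma has_real_derivative_sqrt_quadratic:
  assumes "(q0::real) > 0"
  shows "((\<lambda>t. sqrt (q0 + t*c1 + t^2*c2)) has_real_derivative c1/(2 * sqrt q0)) (at 0)"
proof -
  have d: "((\<lambda>t. q0 + t*c1 + t^2*c2) has_real_derivative c1) (at 0)"
    by (auto intro!: derivative_eq_intros)
  have s: "(sqrt has_real_derivative inverse (sqrt q0)/2) (at ((\<lambda>t. q0 + t*c1 + t^2*c2) 0))"
    using DERIV_real_sqrt[OF assms] by simp
  from DERIV_chain2[OF s d] show ?thesis
    by (rule DERIV_cong) (simp add: field_simps)
qed

definition quad_form :: "('m::finite \<Rightarrow> 'm \<Rightarrow> real) \<Rightarrow> real^'m \<Rightarrow> real" where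
  "quad_form c y = (\<Sum>i\<in>UNIV. \<Sum>j\<in>UNIV. c i j * y $ i * y $ j)"

definition lin_form :: "('m::finite \<Rightarrow> real) \<Rightarrow> real^'m \<Rightarrow> real" where
  "lin_form l y = (\<Sum>j\<in>UNIV. l j * y $ j)"

lemma sum_axis_one_left: "(\<Sum>i\<in>UNIV. f i * (axis D 1 $ i :: real)) = f D"
  by (simp add: axis_one_nth if_distrib cong: if_cong)

lemma quad_form_line_deriv:
  "((\<lambda>t. quad_form c (y + t *\<^sub>R axis D 1)) has_real_derivative lin_form (\<lambda>j. c D j + c j D) y) (at 0)"
proof -
  have "((\<lambda>t. quad_form c (y + t *\<^sub>R axis D 1)) has_real_derivative
     (\<Sum>i\<in>UNIV. \<Sum>j\<in>UNIV. c i j * y $ j * axis D 1 $ i) + (\<Sum>i\<in>UNIV. \<Sum>j\<in>UNIV. c i j * y $ i * axis D 1 $ j)) (at 0)"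
    unfolding quad_form_def sum.distrib[symmetric]
    by (auto intro!: derivative_eq_intros DERIV_sum simp: algebra_simps)
  moreover have "(\<Sum>i\<in>UNIV. \<Sum>j\<in>UNIV. c i j * y $ j * axis D 1 $ i) = (\<Sum>j\<in>UNIV. c D j * y $ j)"
    by (subst sum.swap) (simp add: sum_distrib_right[symmetric] sum_axis_one_left)
  moreover have "(\<Sum>i\<in>UNIV. \<Sum>j\<in>UNIV. c i j * y $ i * axis D 1 $ j) = (\<Sum>i\<in>UNIV. c i D * y $ i)"
    by (simp add: sum_axis_one_left)
  ultimately show ?thesis by (simp add: lin_form_def sum.distrib algebra_simps)
qed

lemma lin_form_line_deriv:
  "((\<lambda>t. lin_form l (y + t *\<^sub>R axis D 1)) has_real_derivative l D) (at 0)"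
proof -
  have "((\<lambda>t. lin_form l (y + t *\<^sub>R axis D 1)) has_real_derivative (\<Sum>j\<in>UNIV. l j * axis D 1 $ j)) (at 0)"
    unfolding lin_form_def by (auto intro!: derivative_eq_intros DERIV_sum)
  then show ?thesis by (simp add: sum_axis_one_left)
qed

lemma pdy_quad_form: "pdy D (\<lambda>x y. quad_form c y) x y = lin_form (\<lambda>j. c D j + c j D) y"
  by (rule pdy_eqI) (rule quad_form_line_deriv)

lemma pdy_lin_form: "pdy D (\<lambda>x y. lin_form l y) x y = l D"
  by (rule pdy_eqI) (rule lin_form_line_deriv)

lemma pdy_const: "pdy D (\<lambda>x y. k) x y = 0"
  by (rule pdy_eqI) simp

lemma quad_form_euler: "(\<Sum>D\<in>UNIV. y $ D * lin_form (\<lambda>j. c D j + c j D) y) = 2 * quad_form c y"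
proof -
  have "(\<Sum>D\<in>UNIV. y $ D * lin_form (\<lambda>j. c D j + c j D) y)
      = quad_form c y + (\<Sum>D\<in>UNIV. \<Sum>j\<in>UNIV. c j D * y $ j * y $ D)"
    by (simp add: quad_form_def lin_form_def sum_distrib_left sum.distrib algebra_simps)
  also have "(\<Sum>D\<in>UNIV. \<Sum>j\<in>UNIV. c j D * y $ j * y $ D) = quad_form c y"
    unfolding quad_form_def by (rule sum.swap)
  finally show ?thesis by simp
qed

lemma quad_form_sum: "(\<Sum>D\<in>UNIV. m D * quad_form (c D) y) = quad_form (\<lambda>i j. \<Sum>D\<in>UNIV. m D * c D i j) y"
proof -
  have "(\<Sum>D\<in>UNIV. m D * quad_form (c D) y) = (\<Sum>D\<in>UNIV. \<Sum>i\<in>UNIV. \<Sum>j\<in>UNIV. m D * c D i j * y $ i * y $ j)"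
    by (simp add: quad_form_def sum_distrib_left mult.assoc)
  also have "\<dots> = (\<Sum>i\<in>UNIV. \<Sum>j\<in>UNIV. \<Sum>D\<in>UNIV. m D * c D i j * y $ i * y $ j)"
    by (subst sum.swap) (rule sum.cong[OF refl], rule sum.swap)
  finally show ?thesis
    by (simp add: quad_form_def sum_distrib_right)
qed

lemma quad_form_diff: "quad_form c y - quad_form d y = quad_form (\<lambda>i j. c i j - d i j) y"
  by (simp add: quad_form_def sum_subtractf left_diff_distrib)

lemma quad_form_scale: "k * quad_form c y = quad_form (\<lambda>i j. k * c i j) y"
  by (simp add: quad_form_def sum_distrib_left mult.assoc)

lemma inner_matrix_quad_form: "y \<bullet> (M *v y) = quad_form (\<lambda>i j. M $ i $ j) y"
  by (simp add: quad_form_def inner_vec_def matrix_vector_mult_def sum_distrib_left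
      mult.commute mult.left_commute)

lemma lin_form_sum: "(\<Sum>E\<in>UNIV. lin_form (l E) y) = lin_form (\<lambda>j. \<Sum>E\<in>UNIV. l E j) y"
  unfolding lin_form_def sum_distrib_right by (rule sum.swap)

lemma lin_form_mult_component: "lin_form l y * y $ A = quad_form (\<lambda>i j. if i = A then l j else 0) y"
proof -
  have "quad_form (\<lambda>i j. if i = A then l j else 0) y
      = (\<Sum>i\<in>UNIV. if i = A then (\<Sum>j\<in>UNIV. l j * y $ A * y $ j) else 0)"
    unfolding quad_form_def by (rule sum.cong[OF refl]) simp
  then show ?thesis
    unfolding lin_form_def sum_distrib_right by (simp add: ac_simps)
qed

section \<open>Sprays projectively equivalent to quadratic sprays\<close>

lemma pdy3_eq_0_if_quad_form:
  assumes "\<And>z. z \<noteq> 0 \<Longrightarrow> \<Phi> x z = quad_form c z" and "y \<noteq> 0"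
  shows "pdy B (pdy C (pdy D \<Phi>)) x y = 0"
proof -
  have "pdy D \<Phi> x z = lin_form (\<lambda>j. c D j + c j D) z" if "z \<noteq> 0" for z
    using pdy_cong_nonzero[OF that, of \<Phi> x "\<lambda>x y. quad_form c y"] assms(1) pdy_quad_form by simp
  then have "pdy C (pdy D \<Phi>) x z = c D C + c C D" if "z \<noteq> 0" for z
    using pdy_cong_nonzero[OF that, of "pdy D \<Phi>" x "\<lambda>x y. lin_form (\<lambda>j. c D j + c j D) y"]
      pdy_lin_form by simp
  then show ?thesis
    using pdy_cong_nonzero[OF assms(2), of "pdy C (pdy D \<Phi>)" x "\<lambda>x y. c D C + c C D"] pdy_const
    by simp
qed

lemma douglas_eq_0_if_geod_coeff_quadratic_plus_projective:
  fixes F :: "real^'m::finite \<Rightarrow> real^'m \<Rightarrow> real" and c :: "'m \<Rightarrow> 'm \<Rightarrow> 'm \<Rightarrow> real"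
  assumes geod: "\<And>E z. z \<noteq> 0 \<Longrightarrow> geod_coeff F E x z = quad_form (c E) z + P z * z $ E"
    and P_deriv: "\<And>E z. z \<noteq> 0 \<Longrightarrow> ((\<lambda>t. P (z + t *\<^sub>R axis E 1)) has_real_derivative dP E z) (at 0)"
    and P_euler: "\<And>z. z \<noteq> 0 \<Longrightarrow> (\<Sum>E\<in>UNIV. dP E z * z $ E) = P z"
    and "y \<noteq> 0"
  shows "douglas F A B C D x y = 0"
proof -
  define m where "m = real CARD('m) + 1"
  define l where "l j = (\<Sum>E\<in>UNIV. c E E j + c E j E)" for j
  have pdy_geod: "pdy E (geod_coeff F E) x z = lin_form (\<lambda>j. c E E j + c E j E) z + dP E z * z $ E + P z"
    if "z \<noteq> 0" for z E
  proof -
    have "pdy E (geod_coeff F E) x z = pdy E (\<lambda>x w. quad_form (c E) w + P w * w $ E) x z"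
      using that geod by (rule pdy_cong_nonzero)
    also have "\<dots> = lin_form (\<lambda>j. c E E j + c E j E) z + dP E z * z $ E + P z"
      by (rule pdy_eqI) (auto intro!: derivative_eq_intros quad_form_line_deriv P_deriv[OF that]
          simp: axis_one_nth)
    finally show ?thesis .
  qed
  have trace: "(\<Sum>E\<in>UNIV. pdy E (geod_coeff F E) x z) = lin_form l z + m * P z" if "z \<noteq> 0" for z
  proof -
    have "(\<Sum>E\<in>UNIV. pdy E (geod_coeff F E) x z) = (\<Sum>E\<in>UNIV. lin_form (\<lambda>j. c E E j + c E j E) z)
        + (\<Sum>E\<in>UNIV. dP E z * z $ E) + (\<Sum>E\<in>(UNIV::'m set). P z)"
      unfolding pdy_geod[OF that] sum.distrib ..
    then show ?thesis
      unfolding lin_form_sum P_euler[OF that] l_def m_def by (simp add: algebra_simps)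
  qed
  define c' where "c' i j = c A i j - 1 / m * (if i = A then l j else 0)" for i j
  define \<Phi> where "\<Phi> = (\<lambda>x y. geod_coeff F A x y - 1 / m * (\<Sum>E\<in>UNIV. pdy E (geod_coeff F E) x y) * y $ A)"
  have \<Phi>_quad: "\<Phi> x z = quad_form c' z" if "z \<noteq> 0" for z
  proof -
    have "\<Phi> x z = quad_form (c A) z - 1 / m * (lin_form l z * z $ A)"
      using that by (simp add: \<Phi>_def trace geod m_def field_simps)
    also have "\<dots> = quad_form c' z"
      unfolding lin_form_mult_component quad_form_scale quad_form_diff c'_def[abs_def] ..
    finally show ?thesis .
  qed
  then have "pdy B (pdy C (pdy D \<Phi>)) x y = 0"
    using pdy3_eq_0_if_quad_form \<open>y \<noteq> 0\<close> by blast
  then show ?thesis by (simp add: douglas_def \<Phi>_def m_def)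
qed

section \<open>Randers metrics\<close>

locale randers =
  fixes a :: "real^'m::finite \<Rightarrow> real^'m^'m" and b :: "real^'m \<Rightarrow> real^'m"
    and F :: "real^'m \<Rightarrow> real^'m \<Rightarrow> real"
  assumes F_eq: "\<And>x y. F x y = sqrt (y \<bullet> (a x *v y)) + b x \<bullet> y"
    and a_symmetric: "\<And>x. transpose (a x) = a x"
    and a_posdef: "\<And>x y. y \<noteq> 0 \<Longrightarrow> y \<bullet> (a x *v y) > 0"
begin

definition alpha where "alpha x y = sqrt (y \<bullet> (a x *v y))"

definition Fy where "Fy x y = (1 / alpha x y) *\<^sub>R (a x *v y) + b x"

lemma a_commute: "a x $ i $ j = a x $ j $ i"
  using a_symmetric[of x] by (metis transpose_def vec_lambda_beta)

lemma F_alpha: "F x y = alpha x y + b x \<bullet> y"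
  by (simp add: F_eq alpha_def)

lemma alpha_pos: "y \<noteq> 0 \<Longrightarrow> alpha x y > 0"
  using a_posdef by (simp add: alpha_def)

lemma alpha_squared: "alpha x y ^ 2 = y \<bullet> (a x *v y)"
  using a_posdef[of y x] by (cases "y = 0") (simp_all add: alpha_def)

lemma Fy_nth: "Fy x y $ D = (a x *v y) $ D / alpha x y + b x $ D"
  by (simp add: Fy_def)

lemma inner_Fy_self:
  assumes "y \<noteq> 0"
  shows "Fy x y \<bullet> y = F x y"
proof -
  have "Fy x y \<bullet> y = ((a x *v y) \<bullet> y) / alpha x y + b x \<bullet> y"
    by (simp add: Fy_def inner_add_left)
  also have "(a x *v y) \<bullet> y = alpha x y ^ 2"
    by (simp add: alpha_squared inner_commute)
  finally show ?thesis
    using alpha_pos[OF assms, of x] by (simp add: F_alpha power2_eq_square)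
qed

lemma a_quadratic_line:
  "(y + t *\<^sub>R v) \<bullet> (a x *v (y + t *\<^sub>R v)) = y \<bullet> (a x *v y) + t * (2 * ((a x *v y) \<bullet> v)) + t^2 * (v \<bullet> (a x *v v))"
proof -
  have s: "y \<bullet> (a x *v v) = (a x *v y) \<bullet> v"
    using inner_symmetric_matrix[OF a_symmetric] inner_commute by metis
  show ?thesis
    by (simp add: matrix_vector_right_distrib matrix_vector_mult_scaleR inner_add_left inner_add_right
        s power2_eq_square algebra_simps inner_commute)
qed

lemma alpha_line_deriv:
  assumes "y \<noteq> 0"
  shows "((\<lambda>t. alpha x (y + t *\<^sub>R v)) has_real_derivative ((a x *v y) \<bullet> v) / alpha x y) (at 0)"
  using has_real_derivative_sqrt_quadratic[OF a_posdef[of y x, OF assms], of "2 * ((a x *v y) \<bullet> v)" "v \<bullet> (a x *v v)"]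
  unfolding alpha_def a_quadratic_line by simp

lemma F_line_deriv:
  assumes "y \<noteq> 0"
  shows "((\<lambda>t. F x (y + t *\<^sub>R v)) has_real_derivative Fy x y \<bullet> v) (at 0)"
proof -
  have "((\<lambda>t. alpha x (y + t *\<^sub>R v) + (b x \<bullet> y + t * (b x \<bullet> v))) has_real_derivative
      ((a x *v y) \<bullet> v) / alpha x y + b x \<bullet> v) (at 0)"
    by (auto intro!: derivative_eq_intros alpha_line_deriv[OF assms])
  then show ?thesis
    by (simp add: F_alpha inner_add_right Fy_def inner_add_left)
qed

lemma pdy_Fsq:
  assumes "y \<noteq> 0"
  shows "pdy D (Fsq F) x y = 2 * F x y * Fy x y $ D"
  unfolding Fsq_def
  by (rule pdy_eqI) (auto intro!: derivative_eq_intros F_line_deriv[OF assms] simp: inner_axis)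

lemma pdyy_Fsq:
  assumes "y \<noteq> 0"
  shows "pdy C (pdy D (Fsq F)) x y = 2 * (Fy x y $ C * Fy x y $ D
     + F x y * (a x $ D $ C / alpha x y - (a x *v y) $ D * (a x *v y) $ C / alpha x y ^ 3))"
proof -
  have "pdy C (pdy D (Fsq F)) x y = pdy C (\<lambda>x z. 2 * F x z * ((a x *v z) $ D / alpha x z + b x $ D)) x y"
    by (rule pdy_cong_nonzero[OF assms]) (simp add: pdy_Fsq Fy_nth)
  also have "\<dots> = 2 * (Fy x y $ C * Fy x y $ D
     + F x y * (a x $ D $ C / alpha x y - (a x *v y) $ D * (a x *v y) $ C / alpha x y ^ 3))"
  proof (rule pdy_eqI)
    have l: "(a x *v (y + t *\<^sub>R axis C 1)) $ D = (a x *v y) $ D + t * a x $ D $ C" for t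
      by (simp add: matrix_vector_right_distrib matrix_vector_mult_scaleR matrix_vector_mult_axis)
    show "((\<lambda>t. 2 * F x (y + t *\<^sub>R axis C 1) * ((a x *v (y + t *\<^sub>R axis C 1)) $ D / alpha x (y + t *\<^sub>R axis C 1) + b x $ D))
       has_real_derivative 2 * (Fy x y $ C * Fy x y $ D
     + F x y * (a x $ D $ C / alpha x y - (a x *v y) $ D * (a x *v y) $ C / alpha x y ^ 3))) (at 0)"
      unfolding l using alpha_pos[OF assms, of x]
      by (auto intro!: derivative_eq_intros F_line_deriv[OF assms] alpha_line_deriv[OF assms]
          simp: Fy_nth inner_axis field_simps power3_eq_cube)
  qed
  finally show ?thesis .
qed

lemma fund_tensor_mult:
  assumes "y \<noteq> 0"
  shows "fund_tensor F x y *v v = (Fy x y \<bullet> v) *\<^sub>R Fy x y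
     + F x y *\<^sub>R ((1 / alpha x y) *\<^sub>R (a x *v v) - (((a x *v y) \<bullet> v) / alpha x y ^ 3) *\<^sub>R (a x *v y))"
  unfolding vec_eq_iff
proof
  fix D
  have p: "alpha x y > 0" using alpha_pos[OF assms] .
  have "(fund_tensor F x y *v v) $ D = (\<Sum>C\<in>UNIV. Fy x y $ D * (Fy x y $ C * v $ C)
      + (F x y / alpha x y) * (a x $ D $ C * v $ C) - (F x y * (a x *v y) $ D / alpha x y ^ 3) * ((a x *v y) $ C * v $ C))"
    unfolding matrix_vector_mult_component[of "fund_tensor F x y"]
    by (rule sum.cong[OF refl])
      (use p in \<open>simp add: fund_tensor_def pdyy_Fsq[OF assms] a_commute[of x _ D] field_simps power3_eq_cube\<close>)
  also have "\<dots> = Fy x y $ D * (Fy x y \<bullet> v) + (F x y / alpha x y) * (a x *v v) $ D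
      - (F x y * (a x *v y) $ D / alpha x y ^ 3) * ((a x *v y) \<bullet> v)"
    unfolding sum.distrib sum_subtractf sum_distrib_left[symmetric] inner_vec_def
      matrix_vector_mult_component inner_real_def ..
  finally show "(fund_tensor F x y *v v) $ D = ((Fy x y \<bullet> v) *\<^sub>R Fy x y
     + F x y *\<^sub>R ((1 / alpha x y) *\<^sub>R (a x *v v) - (((a x *v y) \<bullet> v) / alpha x y ^ 3) *\<^sub>R (a x *v y))) $ D"
    by (simp add: field_simps)
qed

end

text \<open>The first derivatives of \<open>a\<close> and \<open>b\<close> at a point \<open>x0\<close>: \<open>Da C = \<partial>\<^sub>C a\<close> and
  \<open>Db $ C $ j = \<partial>\<^sub>C b\<^sub>j\<close>.  Symmetry of \<open>Db\<close> says that \<open>\<beta>\<close> is closed.\<close>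

locale closed_randers_at = randers a b F for a :: "real^'m::finite \<Rightarrow> real^'m^'m" and b F +
  fixes x0 :: "real^'m" and Da :: "'m \<Rightarrow> real^'m^'m" and Db :: "real^'m^'m"
  assumes a_deriv: "\<And>C i j. ((\<lambda>t. a (x0 + t *\<^sub>R axis C 1) $ i $ j) has_real_derivative Da C $ i $ j) (at 0)"
    and b_deriv: "\<And>C j. ((\<lambda>t. b (x0 + t *\<^sub>R axis C 1) $ j) has_real_derivative Db $ C $ j) (at 0)"
    and Db_symmetric: "\<And>C j. Db $ C $ j = Db $ j $ C"
begin

lemma a_quadratic_xderiv:
  "((\<lambda>t. y \<bullet> (a (x0 + t *\<^sub>R axis C 1) *v y)) has_real_derivative y \<bullet> (Da C *v y)) (at 0)"
  unfolding inner_vec_def matrix_vector_mult_def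
  by (auto intro!: derivative_eq_intros DERIV_sum a_deriv simp: sum_distrib_left)

lemma a_mult_xderiv:
  "((\<lambda>t. (a (x0 + t *\<^sub>R axis C 1) *v y) $ D) has_real_derivative (Da C *v y) $ D) (at 0)"
  unfolding matrix_vector_mult_def
  by (auto intro!: derivative_eq_intros DERIV_sum a_deriv)

lemma b_inner_xderiv: "((\<lambda>t. b (x0 + t *\<^sub>R axis C 1) \<bullet> y) has_real_derivative (Db *v y) $ C) (at 0)"
  unfolding matrix_vector_mult_def inner_vec_def
  by (auto intro!: derivative_eq_intros DERIV_sum b_deriv simp: mult.commute)

lemma alpha_xderiv:
  assumes "y \<noteq> 0"
  shows "((\<lambda>t. alpha (x0 + t *\<^sub>R axis C 1) y) has_real_derivative (y \<bullet> (Da C *v y)) / (2 * alpha x0 y)) (at 0)"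
proof -
  have s: "(sqrt has_real_derivative inverse (sqrt (y \<bullet> (a x0 *v y)))/2)
      (at ((\<lambda>t. y \<bullet> (a (x0 + t *\<^sub>R axis C 1) *v y)) 0))"
    using DERIV_real_sqrt[OF a_posdef[OF assms]] by simp
  from DERIV_chain2[OF s a_quadratic_xderiv] show ?thesis
    unfolding alpha_def by (rule DERIV_cong) (simp add: field_simps)
qed

definition Fx where "Fx C y = (y \<bullet> (Da C *v y)) / (2 * alpha x0 y) + (Db *v y) $ C"

lemma F_xderiv:
  assumes "y \<noteq> 0"
  shows "((\<lambda>t. F (x0 + t *\<^sub>R axis C 1) y) has_real_derivative Fx C y) (at 0)"
  unfolding F_alpha Fx_def
  by (auto intro!: derivative_eq_intros alpha_xderiv[OF assms] b_inner_xderiv)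

lemma pdx_Fsq:
  assumes "y \<noteq> 0"
  shows "pdx C (Fsq F) x0 y = 2 * F x0 y * Fx C y"
  by (rule pdx_eqI) (auto simp: Fsq_def intro!: derivative_eq_intros F_xderiv[OF assms])

lemma pdxy_Fsq:
  assumes "y \<noteq> 0"
  shows "pdx C (pdy D (Fsq F)) x0 y = 2 * Fx C y * Fy x0 y $ D + 2 * F x0 y *
     ((Da C *v y) $ D / alpha x0 y - (a x0 *v y) $ D * (y \<bullet> (Da C *v y)) / (2 * alpha x0 y ^ 3) + Db $ C $ D)"
proof (rule pdx_eqI)
  have e: "(\<lambda>t. pdy D (Fsq F) (x0 + t *\<^sub>R axis C 1) y) = (\<lambda>t. 2 * F (x0 + t *\<^sub>R axis C 1) y *
      ((a (x0 + t *\<^sub>R axis C 1) *v y) $ D / alpha (x0 + t *\<^sub>R axis C 1) y + b (x0 + t *\<^sub>R axis C 1) $ D))"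
    using pdy_Fsq[OF assms] Fy_nth by auto
  show "((\<lambda>t. pdy D (Fsq F) (x0 + t *\<^sub>R axis C 1) y) has_real_derivative 2 * Fx C y * Fy x0 y $ D + 2 * F x0 y *
     ((Da C *v y) $ D / alpha x0 y - (a x0 *v y) $ D * (y \<bullet> (Da C *v y)) / (2 * alpha x0 y ^ 3) + Db $ C $ D)) (at 0)"
    unfolding e using alpha_pos[OF assms, of x0]
    by (auto intro!: derivative_eq_intros F_xderiv[OF assms] alpha_xderiv[OF assms] a_mult_xderiv b_deriv
        simp: Fy_nth field_simps power3_eq_cube)
qed

text \<open>\<open>Gam y $ D = \<Gamma>\<^sub>D\<^sub>i\<^sub>j y\<^sup>i y\<^sup>j\<close> with the Christoffel symbols of the first kind of \<open>a\<close>;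
  \<open>S y = y\<^sup>C y\<^sup>i y\<^sup>j \<partial>\<^sub>C a\<^sub>i\<^sub>j\<close>.\<close>
definition Gam where "Gam y = (\<chi> D. (\<Sum>C\<in>UNIV. y $ C * (Da C *v y) $ D) - (y \<bullet> (Da D *v y)) / 2)"
definition S where "S y = (\<Sum>C\<in>UNIV. y $ C * (y \<bullet> (Da C *v y)))"
definition Fx_y where "Fx_y y = (\<Sum>C\<in>UNIV. y $ C * Fx C y)"

text \<open>The vector \<open>[F\<^sup>2]\<^sub>x\<^sub>C\<^sub>y\<^sub>B y\<^sup>C - [F\<^sup>2]\<^sub>x\<^sub>B\<close>, so that \<open>G = g\<^sup>-\<^sup>1 spray_rhs / 4\<close>.\<close>
definition spray_rhs where
  "spray_rhs y = (\<chi> D. (\<Sum>C\<in>UNIV. pdx C (pdy D (Fsq F)) x0 y * y $ C) - pdx D (Fsq F) x0 y)"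

lemma Fx_y_eq: "Fx_y y = S y / (2 * alpha x0 y) + y \<bullet> (Db *v y)"
proof -
  have "Fx_y y = (\<Sum>C\<in>UNIV. y $ C * (y \<bullet> (Da C *v y)) / (2 * alpha x0 y) + y $ C * (Db *v y) $ C)"
    by (simp add: Fx_y_def Fx_def distrib_left)
  also have "\<dots> = S y / (2 * alpha x0 y) + y \<bullet> (Db *v y)"
    by (simp add: sum.distrib sum_divide_distrib[symmetric] S_def inner_vec_def)
  finally show ?thesis .
qed

lemma inner_Gam_self: "y \<bullet> Gam y = S y / 2"
proof -
  have "y \<bullet> Gam y = (\<Sum>D\<in>UNIV. y $ D * Gam y $ D)" by (simp add: inner_vec_def)
  also have "\<dots> = (\<Sum>D\<in>UNIV. y $ D * (\<Sum>C\<in>UNIV. y $ C * (Da C *v y) $ D)) - S y / 2"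
    by (simp add: Gam_def right_diff_distrib sum_subtractf S_def sum_divide_distrib mult.commute)
  also have "(\<Sum>D\<in>UNIV. y $ D * (\<Sum>C\<in>UNIV. y $ C * (Da C *v y) $ D))
      = (\<Sum>C\<in>UNIV. \<Sum>D\<in>UNIV. y $ D * (y $ C * (Da C *v y) $ D))"
    unfolding sum_distrib_left by (rule sum.swap)
  also have "\<dots> = S y"
    by (simp add: S_def inner_vec_def sum_distrib_left mult.commute mult.left_commute)
  finally show ?thesis by simp
qed

lemma spray_rhs_eq:
  assumes "y \<noteq> 0"
  shows "spray_rhs y = (2 * Fx_y y) *\<^sub>R Fy x0 y
    + (2 * F x0 y) *\<^sub>R ((1 / alpha x0 y) *\<^sub>R Gam y - (S y / (2 * alpha x0 y ^ 3)) *\<^sub>R (a x0 *v y))"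
  unfolding vec_eq_iff
proof
  fix D
  have p: "alpha x0 y > 0" using alpha_pos[OF assms] .
  let ?u = "(a x0 *v y) $ D"
  have "(\<Sum>C\<in>UNIV. pdx C (pdy D (Fsq F)) x0 y * y $ C) =
    (\<Sum>C\<in>UNIV. 2 * Fy x0 y $ D * (y $ C * Fx C y) + (2 * F x0 y / alpha x0 y) * (y $ C * (Da C *v y) $ D)
        - (F x0 y * ?u / alpha x0 y ^ 3) * (y $ C * (y \<bullet> (Da C *v y))) + 2 * F x0 y * (Db $ C $ D * y $ C))"
    by (rule sum.cong) (use p in \<open>simp_all add: pdxy_Fsq[OF assms] field_simps power3_eq_cube\<close>)
  also have "\<dots> = 2 * Fy x0 y $ D * Fx_y y + (2 * F x0 y / alpha x0 y) * (\<Sum>C\<in>UNIV. y $ C * (Da C *v y) $ D)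
        - (F x0 y * ?u / alpha x0 y ^ 3) * S y + 2 * F x0 y * (Db *v y) $ D"
    unfolding sum.distrib sum_subtractf sum_distrib_left[symmetric] Fx_y_def[symmetric] S_def[symmetric]
    \<comment> \<open>The only place where closedness of \<open>\<beta>\<close> enters.\<close>
    by (simp add: matrix_vector_mult_def Db_symmetric)
  finally have e: "(\<Sum>C\<in>UNIV. pdx C (pdy D (Fsq F)) x0 y * y $ C) = 2 * Fy x0 y $ D * Fx_y y
      + (2 * F x0 y / alpha x0 y) * (\<Sum>C\<in>UNIV. y $ C * (Da C *v y) $ D)
      - (F x0 y * ?u / alpha x0 y ^ 3) * S y + 2 * F x0 y * (Db *v y) $ D" .
  show "spray_rhs y $ D = ((2 * Fx_y y) *\<^sub>R Fy x0 y
    + (2 * F x0 y) *\<^sub>R ((1 / alpha x0 y) *\<^sub>R Gam y - (S y / (2 * alpha x0 y ^ 3)) *\<^sub>R (a x0 *v y))) $ D"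
    unfolding spray_rhs_def vec_lambda_beta e pdx_Fsq[OF assms] Fx_def Gam_def
    using p by (simp add: field_simps power3_eq_cube)
qed

definition G_alpha where "G_alpha y = matrix_inv (a x0) *v ((1/2) *\<^sub>R Gam y)"
text \<open>\<open>P\<close> is the multiple of \<open>y\<close> that makes \<open>Fy x0 y \<bullet> G y = Fx_y y / 2\<close> hold (\<open>inner_Fy_G\<close>).\<close>
definition P where "P y = ((y \<bullet> (Db *v y)) / 2 - b x0 \<bullet> G_alpha y) / F x0 y"
definition G where "G y = G_alpha y + P y *\<^sub>R y"

lemma a_G_alpha: "a x0 *v G_alpha y = (1/2) *\<^sub>R Gam y"
proof -
  have "invertible (a x0)"
    using a_posdef by (rule invertible_if_posdef)
  then show ?thesis
    unfolding G_alpha_def matrix_vector_mul_assoc by (simp add: matrix_inv_right)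
qed

lemma inner_a_G:
  "(a x0 *v y) \<bullet> G y = S y / 4 + P y * alpha x0 y ^ 2"
proof -
  have "(a x0 *v y) \<bullet> G y = y \<bullet> (a x0 *v G y)"
    using inner_symmetric_matrix[OF a_symmetric, of y x0 "G y"] by (simp add: inner_commute)
  also have "\<dots> = (1/2) * (y \<bullet> Gam y) + P y * (y \<bullet> (a x0 *v y))"
    by (simp add: G_def matrix_vector_right_distrib matrix_vector_mult_scaleR a_G_alpha inner_add_right)
  finally show ?thesis by (simp add: inner_Gam_self alpha_squared)
qed

lemma inner_Fy_G:
  assumes "y \<noteq> 0" "F x0 y > 0"
  shows "Fy x0 y \<bullet> G y = Fx_y y / 2"
proof -
  have p: "alpha x0 y > 0" using alpha_pos[OF assms(1)] .
  have PF: "P y * F x0 y = (y \<bullet> (Db *v y)) / 2 - b x0 \<bullet> G_alpha y"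
    using assms(2) by (simp add: P_def)
  have "Fy x0 y \<bullet> G y = ((a x0 *v y) \<bullet> G y) / alpha x0 y + b x0 \<bullet> G_alpha y + P y * (b x0 \<bullet> y)"
    using p by (simp add: Fy_def G_def inner_add_left inner_add_right field_simps)
  also have "\<dots> = S y / (4 * alpha x0 y) + (P y * (alpha x0 y + b x0 \<bullet> y) + b x0 \<bullet> G_alpha y)"
    using p by (simp add: inner_a_G field_simps power2_eq_square)
  also have "P y * (alpha x0 y + b x0 \<bullet> y) + b x0 \<bullet> G_alpha y = (y \<bullet> (Db *v y)) / 2"
    using PF by (simp add: F_alpha)
  finally show ?thesis
    using p by (simp add: Fx_y_eq field_simps)
qed

lemma fund_tensor_mult_G:
  assumes "y \<noteq> 0" "F x0 y > 0"
  shows "fund_tensor F x0 y *v G y = (1/4) *\<^sub>R spray_rhs y"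
proof -
  have "a x0 *v G y = (1/2) *\<^sub>R Gam y + P y *\<^sub>R (a x0 *v y)"
    by (simp add: G_def matrix_vector_right_distrib matrix_vector_mult_scaleR a_G_alpha)
  then show ?thesis
    using alpha_pos[OF assms(1), of x0]
    unfolding fund_tensor_mult[OF assms(1)] inner_Fy_G[OF assms] inner_a_G spray_rhs_eq[OF assms(1)] vec_eq_iff
    by (simp add: field_simps power3_eq_cube power2_eq_square)
qed

lemma geod_coeff_eq_G:
  assumes "y \<noteq> 0" "F x0 y > 0" "invertible (fund_tensor F x0 y)"
  shows "geod_coeff F E x0 y = G y $ E"
proof -
  have "geod_coeff F E x0 y = (matrix_inv (fund_tensor F x0 y) *v ((1/4) *\<^sub>R spray_rhs y)) $ E"
    unfolding geod_coeff_def matrix_vector_mult_component vector_scaleR_component spray_rhs_def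
      vec_lambda_beta real_scaleR_def
    by (simp add: sum_distrib_left mult.commute mult.left_commute)
  also have "\<dots> = G y $ E"
    unfolding fund_tensor_mult_G[OF assms(1,2), symmetric] matrix_vector_mul_assoc
      matrix_inv_left[OF assms(3)]
    by simp
  finally show ?thesis .
qed

definition Gam_coeff where "Gam_coeff D i j = Da i $ D $ j - Da D $ i $ j / 2"
definition G_alpha_coeff where "G_alpha_coeff E i j = (\<Sum>D\<in>UNIV. (matrix_inv (a x0) $ E $ D / 2) * Gam_coeff D i j)"
definition P_coeff where "P_coeff i j = Db $ i $ j / 2 - (\<Sum>E\<in>UNIV. b x0 $ E * G_alpha_coeff E i j)"

lemma Gam_quad_form: "Gam y $ D = quad_form (Gam_coeff D) y"
proof -
  have "(\<Sum>C\<in>UNIV. y $ C * (Da C *v y) $ D) = quad_form (\<lambda>i j. Da i $ D $ j) y"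
    by (simp add: quad_form_def matrix_vector_mult_def sum_distrib_left mult.commute mult.left_commute)
  then have "Gam y $ D = quad_form (\<lambda>i j. Da i $ D $ j) y - (1/2) * quad_form (\<lambda>i j. Da D $ i $ j) y"
    by (simp add: Gam_def inner_matrix_quad_form)
  then show ?thesis
    unfolding quad_form_scale quad_form_diff Gam_coeff_def[abs_def] by simp
qed

lemma G_alpha_quad_form: "G_alpha y $ E = quad_form (G_alpha_coeff E) y"
proof -
  have "G_alpha y $ E = (\<Sum>D\<in>UNIV. (matrix_inv (a x0) $ E $ D / 2) * quad_form (Gam_coeff D) y)"
    unfolding G_alpha_def matrix_vector_mult_component Gam_quad_form vector_scaleR_component real_scaleR_def
    by (simp add: mult.assoc)
  then show ?thesis
    unfolding quad_form_sum G_alpha_coeff_def[abs_def] .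
qed

lemma P_quad_form: "P y = quad_form P_coeff y / F x0 y"
proof -
  have "b x0 \<bullet> G_alpha y = (\<Sum>E\<in>UNIV. b x0 $ E * quad_form (G_alpha_coeff E) y)"
    by (simp add: inner_vec_def G_alpha_quad_form)
  then have "(y \<bullet> (Db *v y)) / 2 - b x0 \<bullet> G_alpha y
      = (1/2) * quad_form (\<lambda>i j. Db $ i $ j) y - quad_form (\<lambda>i j. \<Sum>E\<in>UNIV. b x0 $ E * G_alpha_coeff E i j) y"
    by (simp add: quad_form_sum inner_matrix_quad_form)
  then show ?thesis
    unfolding P_def quad_form_scale quad_form_diff P_coeff_def[abs_def] by simp
qed

definition dP where
  "dP E z = (lin_form (\<lambda>j. P_coeff E j + P_coeff j E) z * F x0 z - quad_form P_coeff z * Fy x0 z $ E) / (F x0 z)^2"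

lemma P_line_deriv:
  assumes "z \<noteq> 0" "F x0 z > 0"
  shows "((\<lambda>t. P (z + t *\<^sub>R axis E 1)) has_real_derivative dP E z) (at 0)"
  unfolding P_quad_form dP_def using assms(2)
  by (auto intro!: derivative_eq_intros quad_form_line_deriv F_line_deriv[OF assms(1)]
      simp: inner_axis power2_eq_square)

lemma P_euler:
  assumes "z \<noteq> 0" "F x0 z > 0"
  shows "(\<Sum>E\<in>UNIV. dP E z * z $ E) = P z"
proof -
  let ?F = "F x0 z"
  have "(\<Sum>E\<in>UNIV. dP E z * z $ E) = (?F / ?F^2) * (\<Sum>E\<in>UNIV. z $ E * lin_form (\<lambda>j. P_coeff E j + P_coeff j E) z)
        - (quad_form P_coeff z / ?F^2) * (\<Sum>E\<in>UNIV. Fy x0 z $ E * z $ E)"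
    unfolding sum_distrib_left sum_subtractf[symmetric]
    by (rule sum.cong[OF refl]) (use assms(2) in \<open>simp add: dP_def field_simps\<close>)
  also have "(\<Sum>E\<in>UNIV. Fy x0 z $ E * z $ E) = ?F"
    using inner_Fy_self[OF assms(1)] by (simp add: inner_vec_def)
  finally show ?thesis
    unfolding quad_form_euler using assms(2) by (simp add: P_quad_form field_simps power2_eq_square)
qed

lemma douglas_eq_0:
  assumes F_pos: "\<And>z. z \<noteq> 0 \<Longrightarrow> F x0 z > 0"
    and g_invertible: "\<And>z. z \<noteq> 0 \<Longrightarrow> invertible (fund_tensor F x0 z)"
    and "y \<noteq> 0"
  shows "douglas F A B C D x0 y = 0"
proof (rule douglas_eq_0_if_geod_coeff_quadratic_plus_projective)
  show "geod_coeff F E x0 z = quad_form (G_alpha_coeff E) z + P z * z $ E" if "z \<noteq> 0" for E z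
    using that by (simp add: geod_coeff_eq_G F_pos g_invertible G_def G_alpha_quad_form)
qed (use F_pos P_line_deriv P_euler \<open>y \<noteq> 0\<close> in auto)

end

lemma smooth_real_on_deriv_interior:
  assumes "smooth_real_on S h"
  obtains h' where "\<And>t. t \<in> interior S \<Longrightarrow> (h has_real_derivative h' t) (at t)"
proof -
  obtain D :: "nat \<Rightarrow> real \<Rightarrow> real" where D0: "\<And>t. t \<in> S \<Longrightarrow> D 0 t = h t"
    and DD: "\<And>k t. t \<in> S \<Longrightarrow> (D k has_real_derivative D (Suc k) t) (at t within S)"
    using assms unfolding smooth_real_on_def by blast
  have "(h has_real_derivative D 1 t) (at t)" if t: "t \<in> interior S" for t
  proof -
    have "(D 0 has_real_derivative D 1 t) (at t within S)"
      using DD[of t 0] t interior_subset by auto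
    then have "(D 0 has_real_derivative D 1 t) (at t)"
      using at_within_interior[OF t] by simp
    then show ?thesis
      by (rule has_field_derivative_transform_within_open[of _ _ _ "interior S"])
        (use t D0 interior_subset in auto)
  qed
  then show ?thesis using that by blast
qed

lemma smooth_real_on_tendsto_abs:
  assumes "smooth_real_on {0..<\<rho>} h" "\<rho> > 0"
  shows "((\<lambda>t. h \<bar>t\<bar>) \<longlongrightarrow> h 0) (at 0)"
proof -
  let ?S = "{0..<\<rho>}"
  obtain D :: "nat \<Rightarrow> real \<Rightarrow> real" where D0: "\<And>t. t \<in> ?S \<Longrightarrow> D 0 t = h t"
    and DD: "\<And>k t. t \<in> ?S \<Longrightarrow> (D k has_real_derivative D (Suc k) t) (at t within ?S)"
    using assms(1) unfolding smooth_real_on_def by blast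
  have ev: "eventually (\<lambda>t. \<bar>t\<bar> \<in> ?S \<and> \<bar>t\<bar> \<noteq> 0) (at (0::real))"
    unfolding eventually_at using assms(2) by (intro exI[of _ \<rho>]) auto
  have "continuous (at 0 within ?S) (D 0)"
    using DD[of 0 0] assms(2) by (intro DERIV_continuous) auto
  then have "(D 0 \<longlongrightarrow> D 0 0) (at 0 within ?S)" by (simp add: continuous_within)
  moreover have "filterlim (\<lambda>t::real. \<bar>t\<bar>) (at 0 within ?S) (at 0)"
    unfolding filterlim_at using ev by (auto intro!: tendsto_eq_intros)
  ultimately have "((\<lambda>t. D 0 \<bar>t\<bar>) \<longlongrightarrow> D 0 0) (at 0)" by (rule filterlim_compose)
  moreover have "D 0 0 = h 0" using D0 assms(2) by simp
  moreover have "eventually (\<lambda>t. D 0 \<bar>t\<bar> = h \<bar>t\<bar>) (at (0::real))"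
    using ev by eventually_elim (simp add: D0)
  ultimately show ?thesis using tendsto_cong by fastforce
qed

lemma has_real_derivative_radial_field:
  fixes u :: "real^'n::finite"
  assumes "u \<noteq> 0" and h: "(h has_real_derivative h' (norm u)) (at (norm u))"
  shows "((\<lambda>t. h (norm (u + t *\<^sub>R axis c 1)) * (u + t *\<^sub>R axis c 1) $ k) has_real_derivative
    h (norm u) * (if c = k then 1 else 0) + h' (norm u) * u $ c * u $ k / norm u) (at 0)"
proof -
  define r where "r = norm u"
  have r: "r > 0" using assms(1) by (simp add: r_def)
  have "norm (u + t *\<^sub>R axis c 1) = sqrt (r^2 + t * (2 * u $ c) + t^2 * 1)" for t
  proof -
    have "(norm (u + t *\<^sub>R axis c 1))^2 = r^2 + t * (2 * u $ c) + t^2 * 1"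
      unfolding power2_norm_eq_inner r_def
      by (simp add: inner_add_left inner_add_right inner_axis inner_commute algebra_simps power2_eq_square)
    then show ?thesis by (metis norm_ge_zero real_sqrt_unique)
  qed
  then have "((\<lambda>t. norm (u + t *\<^sub>R axis c 1)) has_real_derivative u $ c / r) (at 0)"
    using has_real_derivative_sqrt_quadratic[of "r^2" "2 * u $ c" 1] r by simp
  moreover have "(h has_real_derivative h' r) (at ((\<lambda>t. norm (u + t *\<^sub>R axis c 1)) 0))"
    using h by (simp add: r_def)
  ultimately have "((\<lambda>t. h (norm (u + t *\<^sub>R axis c 1))) has_real_derivative h' r * (u $ c / r)) (at 0)"
    by (rule DERIV_chain2[rotated])
  then have "((\<lambda>t. h (norm (u + t *\<^sub>R axis c 1)) * (u $ k + t * axis c 1 $ k)) has_real_derivative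
      h' r * (u $ c / r) * (u $ k + 0 * axis c 1 $ k) + axis c 1 $ k * h (norm (u + 0 *\<^sub>R axis c 1))) (at 0)"
    by (rule DERIV_mult) (auto intro!: derivative_eq_intros)
  moreover have "(\<lambda>t. h (norm (u + t *\<^sub>R axis c 1)) * (u + t *\<^sub>R axis c 1) $ k)
      = (\<lambda>t. h (norm (u + t *\<^sub>R axis c 1)) * (u $ k + t * axis c 1 $ k))"
    by simp
  ultimately show ?thesis
    by (auto elim!: DERIV_cong simp: r_def axis_one_nth)
qed

lemma has_real_derivative_abs_times:
  assumes "((\<lambda>t. h \<bar>t\<bar>) \<longlongrightarrow> h 0) (at (0::real))"
  shows "((\<lambda>t. h \<bar>t\<bar> * t) has_real_derivative h 0) (at 0)"
proof -
  have "eventually (\<lambda>y. h \<bar>y\<bar> = (h \<bar>y\<bar> * y - h \<bar>0\<bar> * 0) / (y - 0)) (at (0::real))"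
    unfolding eventually_at by (intro exI[of _ 1]) auto
  with assms have "((\<lambda>y. (h \<bar>y\<bar> * y - h \<bar>0\<bar> * 0) / (y - 0)) \<longlongrightarrow> h 0) (at 0)"
    using tendsto_cong by fastforce
  then show ?thesis by (simp add: has_field_derivative_iff)
qed

lemma has_real_derivative_radial_field_0:
  assumes "((\<lambda>t. h \<bar>t\<bar>) \<longlongrightarrow> h 0) (at (0::real))"
  shows "((\<lambda>t. h (norm (t *\<^sub>R axis c 1 :: real^'n::finite)) * (t *\<^sub>R axis c 1) $ k) has_real_derivative
    h 0 * (if c = k then 1 else 0)) (at 0)"
proof (cases "c = k")
  case True
  then show ?thesis
    using has_real_derivative_abs_times[OF assms] by (simp add: axis_one_nth)
qed (simp add: axis_one_nth)

section \<open>The metric \<open>F_ex\<close> as a Randers metric\<close>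

lemma sum_UNIV_option:
  "(\<Sum>i\<in>(UNIV::'n::finite option set). f i) = f None + (\<Sum>k\<in>UNIV. f (Some k))"
proof -
  have "(\<Sum>i\<in>(UNIV::'n option set). f i) = f None + (\<Sum>i\<in>range Some. f i)"
    by (simp add: UNIV_option_conv)
  also have "(\<Sum>i\<in>range Some. f i) = (\<Sum>k\<in>UNIV. f (Some k))"
    by (subst sum.reindex) (auto simp: inj_on_def)
  finally show ?thesis .
qed

lemma xbar_nth: "xbar x $ k = x $ Some k"
  by (simp add: xbar_def)

lemma xbar_add: "xbar (x + y) = xbar x + xbar y"
  by (simp add: xbar_def vec_eq_iff)

lemma xbar_scaleR: "xbar (c *\<^sub>R x) = c *\<^sub>R xbar x"
  by (simp add: xbar_def vec_eq_iff)

lemma xbar_axis_None: "xbar (axis None (1::real) :: real^('n::finite) option) = 0"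
  by (simp add: xbar_def axis_def vec_eq_iff)

lemma xbar_axis_Some: "xbar (axis (Some c) (1::real) :: real^('n::finite) option) = axis c 1"
  by (simp add: xbar_def axis_def vec_eq_iff)

lemma xbar_eq_0: "xbar y = 0 \<Longrightarrow> y $ None = 0 \<Longrightarrow> y = 0"
  unfolding vec_eq_iff xbar_nth by (metis option.exhaust zero_index)

definition cyl_a :: "real^('n::finite) option \<Rightarrow> real^'n option^'n option" where
  "cyl_a x = (\<chi> i j. case i of None \<Rightarrow> (case j of None \<Rightarrow> exp (x $ None) | Some l \<Rightarrow> 0)
      | Some k \<Rightarrow> (case j of None \<Rightarrow> 0
          | Some l \<Rightarrow> (1 + (norm (xbar x))^2) * (if k = l then 1 else 0) + xbar x $ k * xbar x $ l))"

definition cyl_b :: "(real \<Rightarrow> real) \<Rightarrow> real^('n::finite) option \<Rightarrow> real^'n option" where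
  "cyl_b h x = (\<chi> i. case i of None \<Rightarrow> 0 | Some k \<Rightarrow> h (norm (xbar x)) * xbar x $ k)"

lemma inner_cyl_a: "y \<bullet> (cyl_a x *v y) = (1 + (norm (xbar x))^2) * (norm (xbar y))^2
    + (xbar x \<bullet> xbar y)^2 + exp (x $ None) * (y $ None)^2"
proof -
  have Some: "(cyl_a x *v y) $ Some k = (1 + (norm (xbar x))^2) * xbar y $ k + xbar x $ k * (xbar x \<bullet> xbar y)" for k
  proof -
    have "(cyl_a x *v y) $ Some k = (\<Sum>l\<in>UNIV. ((1 + (norm (xbar x))^2) * (if k = l then 1 else 0)
        + xbar x $ k * xbar x $ l) * xbar y $ l)"
      by (simp add: matrix_vector_mult_component sum_UNIV_option cyl_a_def xbar_nth)
    also have "\<dots> = (\<Sum>l\<in>UNIV. (if l = k then (1 + (norm (xbar x))^2) * xbar y $ l else 0)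
        + xbar x $ k * (xbar x $ l * xbar y $ l))"
      by (rule sum.cong) (auto simp: algebra_simps)
    finally show ?thesis
      unfolding sum.distrib sum_distrib_left[symmetric] inner_vec_def inner_real_def by simp
  qed
  have None: "(cyl_a x *v y) $ None = exp (x $ None) * y $ None"
    by (simp add: matrix_vector_mult_component sum_UNIV_option cyl_a_def)
  have "y \<bullet> (cyl_a x *v y) = y $ None * (cyl_a x *v y) $ None + (\<Sum>k\<in>UNIV. xbar y $ k * (cyl_a x *v y) $ Some k)"
    by (simp add: inner_vec_def sum_UNIV_option xbar_nth)
  also have "\<dots> = exp (x $ None) * (y $ None)^2 + ((1 + (norm (xbar x))^2) * (xbar y \<bullet> xbar y)
      + (xbar x \<bullet> xbar y) * (xbar x \<bullet> xbar y))"
    by (simp add: None Some inner_vec_def distrib_left sum.distrib sum_distrib_left power2_eq_square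
        mult.commute mult.left_commute)
  also have "xbar y \<bullet> xbar y = (norm (xbar y))^2"
    by (rule dot_square_norm)
  finally show ?thesis by (simp add: power2_eq_square algebra_simps)
qed

lemma inner_cyl_b: "cyl_b h x \<bullet> y = h (norm (xbar x)) * (xbar x \<bullet> xbar y)"
  by (simp add: inner_vec_def sum_UNIV_option cyl_b_def xbar_nth sum_distrib_left mult.assoc)

lemma cyl_a_symmetric: "transpose (cyl_a x) = cyl_a x"
  by (simp add: transpose_def cyl_a_def vec_eq_iff split: option.split)

lemma cyl_a_posdef:
  assumes "y \<noteq> 0"
  shows "y \<bullet> (cyl_a x *v y) > 0"
proof -
  have "xbar y \<noteq> 0 \<or> y $ None \<noteq> 0" using xbar_eq_0 assms by blast
  then have "(norm (xbar y))^2 + exp (x $ None) * (y $ None)^2 > 0"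
    by (auto intro: add_pos_nonneg add_nonneg_pos)
  moreover have "(norm (xbar y))^2 \<le> (1 + (norm (xbar x))^2) * (norm (xbar y))^2"
    by (simp add: algebra_simps)
  ultimately show ?thesis
    unfolding inner_cyl_a by (smt (verit) zero_le_power2)
qed

lemma randers_F_ex: "randers cyl_a (cyl_b h) (F_ex h)"
proof
  show "F_ex h x y = sqrt (y \<bullet> (cyl_a x *v y)) + cyl_b h x \<bullet> y" for x y
    by (simp add: F_ex_def inner_cyl_a inner_cyl_b add_ac)
qed (use cyl_a_symmetric cyl_a_posdef in auto)

definition cyl_Da :: "real^('n::finite) option \<Rightarrow> 'n option \<Rightarrow> real^'n option^'n option" where
  "cyl_Da x C = (\<chi> i j. case i of None \<Rightarrow> (case j of None \<Rightarrow> exp (x $ None) * axis C 1 $ None | Some l \<Rightarrow> 0)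
      | Some k \<Rightarrow> (case j of None \<Rightarrow> 0
          | Some l \<Rightarrow> 2 * (xbar x \<bullet> xbar (axis C 1)) * (if k = l then 1 else 0)
              + xbar (axis C 1) $ k * xbar x $ l + xbar x $ k * xbar (axis C 1) $ l))"

lemma cyl_a_deriv:
  "((\<lambda>t. cyl_a (x + t *\<^sub>R axis C 1) $ i $ j) has_real_derivative cyl_Da x C $ i $ j) (at 0)"
proof (cases i; cases j)
  fix k l assume ij: "i = Some k" "j = Some l"
  let ?v = "xbar (axis C 1)"
  have "(norm (xbar x + t *\<^sub>R ?v))^2 = (norm (xbar x))^2 + t * (2 * (xbar x \<bullet> ?v)) + t^2 * (norm ?v)^2" for t
    by (simp only: power2_norm_eq_inner)
      (simp add: inner_add_left inner_add_right inner_commute algebra_simps power2_eq_square)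
  then have "(\<lambda>t. cyl_a (x + t *\<^sub>R axis C 1) $ i $ j) = (\<lambda>t. (1 + ((norm (xbar x))^2 + t * (2 * (xbar x \<bullet> ?v))
      + t^2 * (norm ?v)^2)) * (if k = l then 1 else 0) + (xbar x $ k + t * ?v $ k) * (xbar x $ l + t * ?v $ l))"
    using ij by (simp add: cyl_a_def xbar_add xbar_scaleR)
  then show ?thesis
    using ij by (auto simp: cyl_Da_def intro!: derivative_eq_intros)
qed (auto simp: cyl_a_def cyl_Da_def intro!: derivative_eq_intros)

text \<open>\<open>cyl_Db h h' x $ C $ j = \<partial>\<^sub>C b\<^sub>j\<close>; it is symmetric because \<open>b\<close> is a radial field.\<close>
definition cyl_Db :: "(real \<Rightarrow> real) \<Rightarrow> (real \<Rightarrow> real) \<Rightarrow> real^('n::finite) option \<Rightarrow> real^'n option^'n option" where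
  "cyl_Db h h' x = (\<chi> C j. case C of None \<Rightarrow> 0 | Some c \<Rightarrow> (case j of None \<Rightarrow> 0
      | Some k \<Rightarrow> h (norm (xbar x)) * (if c = k then 1 else 0)
          + (if xbar x = 0 then 0 else h' (norm (xbar x)) * xbar x $ c * xbar x $ k / norm (xbar x))))"

lemma cyl_Db_symmetric: "cyl_Db h h' x $ C $ j = cyl_Db h h' x $ j $ C"
  by (simp add: cyl_Db_def split: option.split)

lemma cyl_b_deriv:
  assumes h_deriv: "\<And>r. 0 < r \<Longrightarrow> r < \<rho> \<Longrightarrow> (h has_real_derivative h' r) (at r)"
    and h_cont: "((\<lambda>t. h \<bar>t\<bar>) \<longlongrightarrow> h 0) (at 0)"
    and "norm (xbar x) < \<rho>"
  shows "((\<lambda>t. cyl_b h (x + t *\<^sub>R axis C 1) $ j) has_real_derivative cyl_Db h h' x $ C $ j) (at 0)"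
proof (cases C; cases j)
  fix c k assume Cj: "C = Some c" "j = Some k"
  have e: "(\<lambda>t. cyl_b h (x + t *\<^sub>R axis C 1) $ j)
      = (\<lambda>t. h (norm (xbar x + t *\<^sub>R axis c 1)) * (xbar x + t *\<^sub>R axis c 1) $ k)"
    using Cj by (simp add: cyl_b_def xbar_add xbar_scaleR xbar_axis_Some)
  show ?thesis
  proof (cases "xbar x = 0")
    case True
    have "cyl_Db h h' x $ C $ j = h 0 * (if c = k then 1 else 0)"
      using Cj True by (simp add: cyl_Db_def)
    then show ?thesis
      unfolding e True add_0_left by (simp only: has_real_derivative_radial_field_0[OF h_cont])
  next
    case False
    have "(h has_real_derivative h' (norm (xbar x))) (at (norm (xbar x)))"
      using h_deriv False assms(3) by simp
    moreover have "cyl_Db h h' x $ C $ j = h (norm (xbar x)) * (if c = k then 1 else 0)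
        + h' (norm (xbar x)) * xbar x $ c * xbar x $ k / norm (xbar x)"
      using Cj False by (simp add: cyl_Db_def)
    ultimately show ?thesis
      unfolding e by (simp only: has_real_derivative_radial_field[OF False])
  qed
qed (simp_all add: cyl_b_def cyl_Db_def xbar_add xbar_scaleR xbar_axis_None)

lemma cylindrically_symmetric_F_ex: "cylindrically_symmetric M (F_ex h)"
  unfolding cylindrically_symmetric_def
proof (intro allI impI ballI)
  fix Q :: "real^'n \<Rightarrow> real^'n" and x y :: "real^'n::finite option"
  assume Q: "orthogonal_transformation Q"
  have "xbar (lift_orth Q v) = Q (xbar v)" "lift_orth Q v $ None = v $ None" for v
    by (simp_all add: xbar_def lift_orth_def vec_eq_iff)
  moreover have "Q u \<bullet> Q w = u \<bullet> w" for u w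
    using Q unfolding orthogonal_transformation_def by blast
  ultimately show "F_ex h (lift_orth Q x) (lift_orth Q y) = F_ex h x y"
    by (simp add: F_ex_def orthogonal_transformation_norm[OF Q])
qed

lemma vanishing_douglas_F_ex:
  assumes "\<rho> > 0" "smooth_real_on {0..<\<rho>} h"
    and "finsler_metric (cyl_domain \<rho> :: (real^'n::finite option) set) (F_ex h)"
  shows "vanishing_douglas (cyl_domain \<rho> :: (real^'n option) set) (F_ex h)"
  unfolding vanishing_douglas_def
proof (intro ballI allI impI)
  fix x y :: "real^'n option" and A B C D :: "'n option"
  assume x: "x \<in> cyl_domain \<rho>" and "y \<noteq> 0"
  obtain h' where h': "\<And>r. 0 < r \<Longrightarrow> r < \<rho> \<Longrightarrow> (h has_real_derivative h' r) (at r)"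
    using smooth_real_on_deriv_interior[OF assms(2)] by (metis greaterThanLessThan_iff interior_atLeastLessThan)
  have "norm (xbar x) < \<rho>" using x by (simp add: cyl_domain_def)
  then interpret closed_randers_at cyl_a "cyl_b h" "F_ex h" x "cyl_Da x" "cyl_Db h h' x"
    by (intro closed_randers_at.intro randers_F_ex closed_randers_at_axioms.intro cyl_a_deriv
        cyl_Db_symmetric cyl_b_deriv[where \<rho> = \<rho>, OF h' smooth_real_on_tendsto_abs[OF assms(2,1)]])
  have "F_ex h x z > 0" and "invertible (fund_tensor (F_ex h) x z)" if "z \<noteq> 0" for z
    using assms(3) x that unfolding finsler_metric_def
    by (auto intro!: invertible_if_posdef simp: inner_matrix_quad_form quad_form_def ac_simps)
  then show "douglas (F_ex h) A B C D x y = 0"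
    using douglas_eq_0 \<open>y \<noteq> 0\<close> by blast
qed

theorem mainTheorem8:
  fixes h :: "real \<Rightarrow> real" and \<rho> :: real
  assumes "CARD('n::finite) \<ge> 3"
    and "\<rho> > 0"
    and "smooth_real_on {0..<\<rho>} h"
    and "finsler_metric (cyl_domain \<rho> :: (real^'n option) set) (F_ex h)"
  shows "cylindrically_symmetric (cyl_domain \<rho> :: (real^'n option) set) (F_ex h)
       \<and> vanishing_douglas (cyl_domain \<rho> :: (real^'n option) set) (F_ex h)"
  using cylindrically_symmetric_F_ex vanishing_douglas_F_ex[OF assms(2-4)] by blast

end
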